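(* There exists $\beta>\frac23$ such that, with $I=(\frac23,\beta)$, the function $\widetilde{M_f}$ defined in the context satisfies $\widetilde{M_f}(r)>0$ for all $r\in I$.
   Context: For $r>\frac23$ let $u_b(r)\in(\frac65,\frac43)$ be the unique $u\in(\frac65,\frac43)$ with $2-u+2q(1-u)=0$ at $q=1+\sqrt{\frac{r+u-2}{r+0.1}}$. Set $q_{f,\pm}(r)=1\pm\sqrt{\frac{r}{r+0.1}}$, $q_{b,\pm}(r)=1\pm\sqrt{\frac{r+u_b(r)-2}{r+0.1}}$, $S(r)=(q_{f,+}-2q_{f,-})+(q_{b,+}-2q_{b,-})$ and $D_0(r)=\frac{2(2-u_b(r))^2}{(r+0.1)S(r)^2}$ (equivalently, $D_0(r)>0$ together with some $\mu_0(r)$ solves $2+\mu=\frac12\sqrt{2D(r+0.1)}(q_{f,+}-2q_{f,-})$ and $u_b+\mu=-\frac12\sqrt{2D(r+0.1)}(q_{b,+}-2q_{b,-})$). Let $\phi(\chi)=(1+e^{-\frac{\sqrt2}{2}\chi})^{-1}$, $\kappa_f(r)=\frac12-\frac{q_{f,-}(r)}{q_{f,+}(r)}$ and $$\widetilde{M_f}(r)=-q_{f,+}(r)\sqrt{\frac{r+0.1}{D_0(r)}}\int_{-\infty}^{\infty}e^{-\sqrt2\kappa_f(r)\chi}\phi'(\chi)^2d\chi+\int_{-\infty}^{\infty}e^{-\sqrt2\kappa_f(r)\chi}\phi'(\chi)\phi(\chi)d\chi .$$ *)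

theory Defs
  imports "HOL-Analysis.Analysis"
begin

definition qb_of :: "real \<Rightarrow> real \<Rightarrow> real" where
  "qb_of r u = 1 + sqrt ((r + u - 2) / (r + 1/10))"

definition u_b :: "real \<Rightarrow> real" where
  "u_b r = (THE u. u \<in> {6/5<..<4/3} \<and> 2 - u + 2 * qb_of r u * (1 - u) = 0)"

definition q_fp :: "real \<Rightarrow> real" where "q_fp r = 1 + sqrt (r / (r + 1/10))"
definition q_fm :: "real \<Rightarrow> real" where "q_fm r = 1 - sqrt (r / (r + 1/10))"
definition q_bp :: "real \<Rightarrow> real" where
  "q_bp r = 1 + sqrt ((r + u_b r - 2) / (r + 1/10))"
definition q_bm :: "real \<Rightarrow> real" where
  "q_bm r = 1 - sqrt ((r + u_b r - 2) / (r + 1/10))"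

definition S_fun :: "real \<Rightarrow> real" where
  "S_fun r = (q_fp r - 2 * q_fm r) + (q_bp r - 2 * q_bm r)"

definition D0 :: "real \<Rightarrow> real" where
  "D0 r = 2 * (2 - u_b r)^2 / ((r + 1/10) * (S_fun r)^2)"

definition phi :: "real \<Rightarrow> real" where
  "phi x = 1 / (1 + exp (- (sqrt 2 / 2) * x))"

definition kappa_f :: "real \<Rightarrow> real" where
  "kappa_f r = 1/2 - q_fm r / q_fp r"

definition M_f_tilde :: "real \<Rightarrow> real" where
  "M_f_tilde r =
     - q_fp r * sqrt ((r + 1/10) / D0 r)
         * (LBINT x. exp (- sqrt 2 * kappa_f r * x) * (deriv phi x)^2)
     + (LBINT x. exp (- sqrt 2 * kappa_f r * x) * deriv phi x * phi x)"

end

theory Submission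
  imports Defs "HOL-Real_Asymp.Real_Asymp"
begin

(* The logistic profile satisfies phi' = (sqrt 2 / 2) phi (1 - phi). Hence, with the weight
   w = exp (- sqrt 2 kappa_f x) and A = q_{f,+} sqrt ((r + 0.1) / D_0), the integrand of
   M_f_tilde r equals w phi' phi (1 - A (sqrt 2 / 2) (1 - phi)), which is pointwise positive
   once A sqrt 2 / 2 <= 1; it is integrable because 0 <= kappa_f <= 1/2 forces w phi <= 1.
   As r decreases to 2/3 the root u_b(r) tends to 4/3, so q_{b,+-} tend to 1, and elementary
   bounds on the square roots give A sqrt 2 / 2 < 0.93 for 2/3 < r < 2/3 + 10^-4. *)

lemma integral_lborel_pos:
  fixes f :: "'a::euclidean_space \<Rightarrow> real"
  assumes "integrable lborel f" and "\<And>x. 0 < f x"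
  shows "0 < integral\<^sup>L lborel f"
proof -
  have "integral\<^sup>L lborel f \<noteq> 0"
  proof
    assume "integral\<^sup>L lborel f = 0"
    then have "AE x in lborel. f x = 0"
      using assms by (subst integral_nonneg_eq_0_iff_AE[symmetric]) (auto intro: less_imp_le)
    then have "AE x::'a in lborel. False"
      using assms(2) by (simp add: less_le)
    then show False
      using ae_filter_eq_bot_iff[of "lborel :: 'a measure"] by (simp add: trivial_limit_def)
  qed
  moreover have "0 \<le> integral\<^sup>L lborel f"
    using assms(2) by (intro integral_nonneg_AE) (auto intro: less_imp_le)
  ultimately show ?thesis by simp
qed

lemma phi_pos: "0 < phi x"
  unfolding phi_def by (simp add: add_pos_pos)

lemma phi_less_one: "phi x < 1"
  unfolding phi_def by (simp add: divide_less_eq add_pos_pos)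

lemma one_plus_exp_neq_zero: "1 + exp (t::real) \<noteq> 0"
  using exp_gt_zero[of t] by linarith

lemma phi_has_real_derivative:
  "(phi has_real_derivative sqrt 2 / 2 * phi x * (1 - phi x)) (at x)"
proof -
  define e where "e = exp (- (sqrt 2 / 2) * x)"
  have e: "0 < e" unfolding e_def by simp
  have "(phi has_real_derivative sqrt 2 / 2 * e / (1 + e)^2) (at x)"
    unfolding phi_def e_def
    by (rule derivative_eq_intros refl | simp add: one_plus_exp_neq_zero)+
       (simp add: field_simps power2_eq_square one_plus_exp_neq_zero)
  also have "sqrt 2 / 2 * e / (1 + e)^2 = sqrt 2 / 2 * phi x * (1 - phi x)"
    unfolding phi_def e_def[symmetric] using e by (simp add: field_simps power2_eq_square)
  finally show ?thesis .
qed

lemma isCont_phi: "isCont phi x"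
  using phi_has_real_derivative by (rule DERIV_isCont)

lemma borel_measurable_phi [measurable]: "phi \<in> borel_measurable borel"
  unfolding phi_def[abs_def] by measurable

lemma deriv_phi: "deriv phi = (\<lambda>x. sqrt 2 / 2 * phi x * (1 - phi x))"
  using phi_has_real_derivative by (intro ext DERIV_imp_deriv)

lemma integrable_deriv_phi: "integrable lborel (deriv phi)"
proof -
  have "set_integrable lborel (einterval (-\<infinity>) \<infinity>) (deriv phi)"
  proof (rule interval_integral_FTC_nonneg(1)[where F = phi and A = 0 and B = 1])
    show "((phi \<circ> real_of_ereal) \<longlongrightarrow> 0) (at_right (-\<infinity>))"
      unfolding ereal_tendsto_simps phi_def by real_asymp
    show "((phi \<circ> real_of_ereal) \<longlongrightarrow> 1) (at_left \<infinity>)"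
      unfolding ereal_tendsto_simps phi_def by real_asymp
    show "isCont (deriv phi) x" for x
      unfolding deriv_phi by (intro continuous_intros isCont_phi)
  qed (use phi_has_real_derivative phi_pos phi_less_one in \<open>auto simp: deriv_phi less_imp_le\<close>)
  then show ?thesis by (simp add: set_integrable_def einterval_def)
qed

lemma deriv_phi_pos: "0 < deriv phi x"
  using phi_pos phi_less_one by (simp add: deriv_phi)

lemma exp_weight_mult_phi_le_one:
  assumes "0 \<le> k" and "k \<le> 1/2"
  shows "exp (- sqrt 2 * k * x) * phi x \<le> 1"
proof -
  define e where "e = exp (- (sqrt 2 / 2) * x)"
  have "0 < 1 + e" unfolding e_def by (simp add: add_pos_pos)
  have "exp (- sqrt 2 * k * x) \<le> 1 + e"
  proof (cases "0 \<le> x")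
    case True
    then have "exp (- sqrt 2 * k * x) \<le> 1"
      using assms by simp
    then show ?thesis unfolding e_def by (smt (verit) exp_gt_zero)
  next
    case False
    then have "sqrt 2 * k * (- x) \<le> sqrt 2 * (1/2) * (- x)"
      using assms by (intro mult_right_mono mult_left_mono) auto
    then have "exp (- sqrt 2 * k * x) \<le> e"
      unfolding e_def by simp
    then show ?thesis by simp
  qed
  then show ?thesis
    unfolding phi_def e_def[symmetric] using \<open>0 < 1 + e\<close> by simp
qed

lemma weighted_logistic_integral_pos:
  fixes k A :: real
  assumes "0 \<le> k" and "k \<le> 1/2" and "A * (sqrt 2 / 2) \<le> 1"
  shows "0 < - A * (LBINT x. exp (- sqrt 2 * k * x) * (deriv phi x)^2)
             + (LBINT x. exp (- sqrt 2 * k * x) * deriv phi x * phi x)"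
proof -
  define f where "f x = exp (- sqrt 2 * k * x) * deriv phi x * phi x" for x
  define g where "g x = exp (- sqrt 2 * k * x) * (deriv phi x)^2" for x
  have g_eq: "g x = f x * (sqrt 2 / 2 * (1 - phi x))" for x
    unfolding f_def g_def by (simp add: deriv_phi power2_eq_square)
  have f_pos: "0 < f x" for x
    unfolding f_def using deriv_phi_pos phi_pos by simp
  have f_le: "f x \<le> deriv phi x" for x
  proof -
    have "f x = (exp (- sqrt 2 * k * x) * phi x) * deriv phi x"
      unfolding f_def by (simp add: mult_ac)
    then show ?thesis
      using exp_weight_mult_phi_le_one[OF assms(1,2)] deriv_phi_pos[of x] phi_pos[of x]
      by (simp add: mult_left_le_one_le)
  qed
  have factor_nonneg: "0 \<le> sqrt 2 / 2 * (1 - phi x)" for x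
    using phi_less_one[of x] by simp
  have factor_le_one: "sqrt 2 / 2 * (1 - phi x) \<le> 1 * 1" for x
    using phi_pos[of x] phi_less_one[of x] sqrt2_less_2 by (intro mult_mono) auto
  have g_bounds: "0 \<le> g x" "g x \<le> f x" for x
    unfolding g_eq using f_pos[of x] factor_nonneg[of x] factor_le_one[of x]
    by (auto intro: mult_left_le)
  have measurable: "f \<in> borel_measurable lborel" "g \<in> borel_measurable lborel"
    unfolding f_def g_def deriv_phi by measurable
  have bounds: "norm (f x) \<le> norm (deriv phi x)" "norm (g x) \<le> norm (deriv phi x)" for x
    using f_pos[of x] f_le[of x] g_bounds[of x] deriv_phi_pos[of x] by auto
  have integrable: "integrable lborel f" "integrable lborel g"
    using bounds by (auto intro!: Bochner_Integration.integrable_bound[OF integrable_deriv_phi]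
                                  measurable)
  have "0 < f x - A * g x" for x
  proof -
    have "A * (sqrt 2 / 2 * (1 - phi x)) < 1"
    proof (cases "A \<le> 0")
      case True
      then show ?thesis using mult_nonpos_nonneg[OF True factor_nonneg[of x]] by linarith
    next
      case False
      have "sqrt 2 / 2 * (1 - phi x) < sqrt 2 / 2"
        using phi_pos[of x] by simp
      then have "A * (sqrt 2 / 2 * (1 - phi x)) < A * (sqrt 2 / 2)"
        using False by (intro mult_strict_left_mono) auto
      then show ?thesis using assms(3) by linarith
    qed
    moreover have "f x - A * g x = f x * (1 - A * (sqrt 2 / 2 * (1 - phi x)))"
      unfolding g_eq by (simp add: algebra_simps)
    ultimately show ?thesis using f_pos[of x] by simp
  qed
  then have "0 < (LBINT x. f x - A * g x)"
    using integrable by (intro integral_lborel_pos) auto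
  also have "(LBINT x. f x - A * g x) = - A * (LBINT x. g x) + (LBINT x. f x)"
    using integrable by simp
  finally show ?thesis unfolding f_def g_def .
qed

lemma qb_of_pos:
  assumes "2/3 < r" and "6/5 \<le> u"
  shows "0 < qb_of r u"
proof -
  have "-1 < (r + u - 2) / (r + 1/10)"
    using assms by (simp add: field_simps)
  then have "-1 < sqrt ((r + u - 2) / (r + 1/10))"
    using real_sqrt_less_iff[of "-1"] by (simp add: real_sqrt_minus)
  then show ?thesis unfolding qb_of_def by simp
qed

lemma qb_of_mono:
  assumes "2/3 < r" and "u \<le> v"
  shows "qb_of r u \<le> qb_of r v"
  unfolding qb_of_def using assms by (simp add: divide_right_mono)

lemma u_b_equation_strict_antimono:
  assumes "2/3 < r" and "6/5 \<le> u" and "u < v"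
  shows "2 - v + 2 * qb_of r v * (1 - v) < 2 - u + 2 * qb_of r u * (1 - u)"
proof -
  have "qb_of r u * (u - 1) < qb_of r u * (v - 1)"
    using qb_of_pos[OF assms(1,2)] assms(3) by simp
  also have "\<dots> \<le> qb_of r v * (v - 1)"
    using qb_of_mono[OF assms(1)] assms by (intro mult_right_mono) auto
  finally show ?thesis using assms(3) by (simp add: algebra_simps)
qed

lemma u_b_equation_unique_root:
  assumes "2/3 < r"
  shows "\<exists>!u. u \<in> {6/5<..<4/3} \<and> 2 - u + 2 * qb_of r u * (1 - u) = 0"
proof -
  define F where "F u = 2 - u + 2 * qb_of r u * (1 - u)" for u
  have "F (6/5) > 0"
  proof -
    have "sqrt ((r + 6/5 - 2) / (r + 1/10)) < 1"
      using assms by (simp add: field_simps)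
    then show ?thesis unfolding F_def qb_of_def by simp
  qed
  moreover have "F (4/3) < 0"
  proof -
    have "0 < sqrt ((r + 4/3 - 2) / (r + 1/10))"
      using assms by (simp add: field_simps)
    then show ?thesis unfolding F_def qb_of_def by simp
  qed
  moreover have "continuous_on {6/5..4/3} F"
    unfolding F_def qb_of_def using assms by (intro continuous_intros) auto
  ultimately obtain u where u: "6/5 \<le> u" "u \<le> 4/3" "F u = 0"
    using IVT2'[of F "4/3" 0 "6/5"] by auto
  moreover have "u \<noteq> 6/5" "u \<noteq> 4/3"
    using u(3) \<open>F (6/5) > 0\<close> \<open>F (4/3) < 0\<close> by (metis less_irrefl)+
  ultimately have "u \<in> {6/5<..<4/3}" using u by auto
  moreover have "v = u" if "v \<in> {6/5<..<4/3}" "F v = 0" for v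
    using u that u_b_equation_strict_antimono[OF assms, of u v]
      u_b_equation_strict_antimono[OF assms, of v u]
    unfolding F_def by (cases u v rule: linorder_cases) auto
  ultimately show ?thesis using u unfolding F_def by blast
qed

lemma u_b_bounds:
  assumes "2/3 < r"
  shows "6/5 < u_b r" and "u_b r < 4/3"
    and u_b_equation: "2 - u_b r + 2 * qb_of r (u_b r) * (1 - u_b r) = 0"
  using theI'[OF u_b_equation_unique_root[OF assms]] unfolding u_b_def[symmetric] by auto

lemma r_add_u_b_gt_two:
  assumes "2/3 < r"
  shows "2 < r + u_b r"
proof (rule ccontr)
  assume "\<not> 2 < r + u_b r"
  then have "qb_of r (u_b r) \<le> 1"
    using assms unfolding qb_of_def by (simp add: divide_nonpos_pos)
  then have "qb_of r (u_b r) * (u_b r - 1) \<le> 1 * (u_b r - 1)"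
    using u_b_bounds(1)[OF assms] by (intro mult_right_mono) auto
  moreover have "2 - u_b r = 2 * (qb_of r (u_b r) * (u_b r - 1))"
    using u_b_equation[OF assms] by (simp add: algebra_simps)
  ultimately show False using u_b_bounds(2)[OF assms] by argo
qed

lemma kappa_f_bounds:
  assumes "1/80 \<le> r"
  shows "0 \<le> kappa_f r" and "kappa_f r \<le> 1/2"
proof -
  define x where "x = sqrt (r / (r + 1/10))"
  have "1/3 \<le> x"
    unfolding x_def using assms by (intro real_le_rsqrt) (simp add: field_simps power2_eq_square)
  moreover have "x \<le> 1"
    unfolding x_def using assms by (simp add: field_simps)
  ultimately show "0 \<le> kappa_f r" "kappa_f r \<le> 1/2"
    unfolding kappa_f_def q_fp_def q_fm_def x_def[symmetric] by (simp_all add: field_simps)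
qed

lemma S_fun_eq:
  "S_fun r = 3 * sqrt (r / (r + 1/10)) + 3 * sqrt ((r + u_b r - 2) / (r + 1/10)) - 2"
  unfolding S_fun_def q_fp_def q_fm_def q_bp_def q_bm_def by simp

lemma sqrt_ratio_D0:
  assumes "-1/10 < r" and "u_b r < 2" and "0 < S_fun r"
  shows "sqrt ((r + 1/10) / D0 r) = (r + 1/10) * S_fun r / (sqrt 2 * (2 - u_b r))"
proof (rule real_sqrt_unique)
  have "((r + 1/10) * S_fun r / (sqrt 2 * (2 - u_b r)))\<^sup>2
      = (r + 1/10)\<^sup>2 * (S_fun r)\<^sup>2 / (2 * (2 - u_b r)\<^sup>2)"
    by (simp add: power_divide power_mult_distrib)
  also have "\<dots> = (r + 1/10) / D0 r"
    unfolding D0_def using assms by (simp add: field_simps power2_eq_square)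
  finally show "((r + 1/10) * S_fun r / (sqrt 2 * (2 - u_b r)))\<^sup>2 = (r + 1/10) / D0 r" .
qed (use assms in simp)

lemma M_f_tilde_coefficient_le_one:
  assumes "2/3 < r" and "r < 2/3 + 1/10000"
  shows "q_fp r * sqrt ((r + 1/10) / D0 r) * (sqrt 2 / 2) \<le> 1"
proof -
  define u where "u = u_b r"
  define x where "x = sqrt (r / (r + 1/10))"
  define y where "y = sqrt ((r + u - 2) / (r + 1/10))"
  have u: "6/5 < u" "u < 4/3" "2 < r + u"
    unfolding u_def using u_b_bounds[OF assms(1)] r_add_u_b_gt_two[OF assms(1)] by auto
  have x: "93/100 < x" "x < 933/1000"
    unfolding x_def using assms
    by (intro real_less_rsqrt real_less_lsqrt; simp add: field_simps power2_eq_square)+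
  have "(r + u - 2) / (r + 1/10) < (3/250)\<^sup>2"
    using assms u by (simp add: pos_divide_less_eq power2_eq_square)
  then have "y < 3/250"
    unfolding y_def by (intro real_less_lsqrt) simp_all
  moreover have "0 \<le> y"
    unfolding y_def using assms u by simp
  ultimately have y: "0 \<le> y" "y < 3/250" by simp_all
  have S: "S_fun r = 3 * x + 3 * y - 2"
    unfolding S_fun_eq x_def y_def u_def ..
  have sqrt_eq: "sqrt ((r + 1/10) / D0 r) = (r + 1/10) * S_fun r / (sqrt 2 * (2 - u))"
    unfolding u_def using assms x y u S by (intro sqrt_ratio_D0) (auto simp: u_def)
  have coefficient:
    "q_fp r * sqrt ((r + 1/10) / D0 r) * (sqrt 2 / 2) = (1 + x) * (r + 1/10) * S_fun r / (2 * (2 - u))"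
    unfolding q_fp_def x_def[symmetric] sqrt_eq using u by (simp add: field_simps)
  have "(1 + x) * (r + 1/10) * S_fun r < (1933/1000) * (7668/10000) * (835/1000)"
    using assms x y unfolding S by (intro mult_strict_mono) auto
  also have "\<dots> < 2 * (2 - u)"
    using u by simp
  finally show ?thesis
    unfolding coefficient using u by simp
qed

theorem theorem3:
  shows "\<exists>\<beta>::real. \<beta> > 2/3 \<and> (\<forall>r \<in> {2/3<..<\<beta>}. M_f_tilde r > 0)"
proof (intro exI conjI ballI)
  fix r :: real
  assume "r \<in> {2/3<..<2/3 + 1/10000}"
  then have r: "2/3 < r" "r < 2/3 + 1/10000" by auto
  have "0 < - (q_fp r * sqrt ((r + 1/10) / D0 r))
              * (LBINT x. exp (- sqrt 2 * kappa_f r * x) * (deriv phi x)\<^sup>2)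
            + (LBINT x. exp (- sqrt 2 * kappa_f r * x) * deriv phi x * phi x)"
    using r by (intro weighted_logistic_integral_pos kappa_f_bounds M_f_tilde_coefficient_le_one) auto
  then show "0 < M_f_tilde r"
    unfolding M_f_tilde_def by simp
qed simp

end
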